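(* Let $(X,\mathcal{Q},H)$ be a Diophantine space and let $K\subseteq X$ have the automorphism property. Suppose that for every $Q > 0$, the set $\{r\in\mathcal{Q} : H(r)\leq Q\}$ intersects each ball of $X$ in only finitely many points. Fix $(a,A)\in\mathbb{R}^2$, and suppose that $K$ is not uniformly $\kappa\Psi_{a,A}$-approximable for any $\kappa > 0$. Then the set $\{x\in X : x\text{ is not }\kappa\Psi_{a,A}\text{-approximable for any }\kappa > 0\}$ is comeager in $X$.
   Context: A Diophantine space is a triple $(X,\mathcal{Q},H)$ where $X$ is a complete metric space (with metric $\mathrm{dist}$), $\mathcal{Q}\subseteq X$ is a dense subset, and $H:\mathcal{Q}\to(0,\infty)$ (the height function). An automorphism of $(X,\mathcal{Q},H)$ is a bi-Lipschitz map $\Phi:X\to X$ with $\Phi(\mathcal{Q})=\mathcal{Q}$ such that there is a constant $C\geq 1$ with $C^{-1}H(r)\leq H(\Phi(r))\leq C H(r)$ for all $r\in\mathcal{Q}$. A set $K\subseteq X$ has the automorphism property if for every nonempty open $B\subseteq X$ there is an automorphism $\Phi$ with $\Phi(K)\subseteq B$. For a function $\Psi:(0,\infty)\times\mathbb{N}\to(0,\infty)$ and $Q_0\in\mathbb{N}$, a point $x\in X$ is $(\Psi,Q_0)$-approximable if for every integer $Q\geq Q_0$ there exists $r\in\mathcal{Q}$ with $H(r)\leq Q$ and $\mathrm{dist}(x,r)<\Psi(H(r),Q)$; $x$ is $\Psi$-approximable if it is $(\Psi,Q_0)$-approximable for some $Q_0$; a set $S$ is uniformly $\Psi$-approximable if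 there is a single $Q_0$ such that every point of $S$ is $(\Psi,Q_0)$-approximable. Here $\kappa\Psi_{a,A}(q,Q)=\kappa q^{-a}Q^{-A}$. *)

theory Defs
  imports "HOL-Analysis.Analysis"
begin

text \<open>The complete metric space X is the type 'a (class complete_space), so X = UNIV.
  A Diophantine space is given by a dense set Qs of "rationals" and a height function H,
  positive on Qs.\<close>

definition diophantine_space :: "('a::{metric_space,complete_space}) set \<Rightarrow> ('a \<Rightarrow> real) \<Rightarrow> bool" where
  "diophantine_space Qs H \<longleftrightarrow> closure Qs = UNIV \<and> (\<forall>r\<in>Qs. H r > 0)"

definition bi_lipschitz :: "('a::metric_space \<Rightarrow> 'a) \<Rightarrow> bool" where
  "bi_lipschitz \<Phi> \<longleftrightarrow> (\<exists>L\<ge>1. \<forall>x y. dist x y \<le> L * dist (\<Phi> x) (\<Phi> y) \<and> dist (\<Phi> x) (\<Phi> y) \<le> L * dist x y)"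

definition automorphism :: "'a::metric_space set \<Rightarrow> ('a \<Rightarrow> real) \<Rightarrow> ('a \<Rightarrow> 'a) \<Rightarrow> bool" where
  "automorphism Qs H \<Phi> \<longleftrightarrow> bi_lipschitz \<Phi> \<and> \<Phi> ` Qs = Qs \<and>
     (\<exists>C\<ge>1. \<forall>r\<in>Qs. H r / C \<le> H (\<Phi> r) \<and> H (\<Phi> r) \<le> C * H r)"

definition automorphism_property :: "'a::metric_space set \<Rightarrow> ('a \<Rightarrow> real) \<Rightarrow> 'a set \<Rightarrow> bool" where
  "automorphism_property Qs H K \<longleftrightarrow>
     (\<forall>B. open B \<and> B \<noteq> {} \<longrightarrow> (\<exists>\<Phi>. automorphism Qs H \<Phi> \<and> \<Phi> ` K \<subseteq> B))"

definition approx_from :: "'a::metric_space set \<Rightarrow> ('a \<Rightarrow> real) \<Rightarrow> (real \<Rightarrow> nat \<Rightarrow> real) \<Rightarrow> nat \<Rightarrow> 'a \<Rightarrow> bool" where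
  "approx_from Qs H \<Psi> Q0 x \<longleftrightarrow>
     (\<forall>Q::nat. Q \<ge> Q0 \<longrightarrow> (\<exists>r\<in>Qs. H r \<le> real Q \<and> dist x r < \<Psi> (H r) Q))"

definition approximable :: "'a::metric_space set \<Rightarrow> ('a \<Rightarrow> real) \<Rightarrow> (real \<Rightarrow> nat \<Rightarrow> real) \<Rightarrow> 'a \<Rightarrow> bool" where
  "approximable Qs H \<Psi> x \<longleftrightarrow> (\<exists>Q0. approx_from Qs H \<Psi> Q0 x)"

definition uniformly_approximable :: "'a::metric_space set \<Rightarrow> ('a \<Rightarrow> real) \<Rightarrow> (real \<Rightarrow> nat \<Rightarrow> real) \<Rightarrow> 'a set \<Rightarrow> bool" where
  "uniformly_approximable Qs H \<Psi> S \<longleftrightarrow> (\<exists>Q0. \<forall>x\<in>S. approx_from Qs H \<Psi> Q0 x)"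

definition Psi :: "real \<Rightarrow> real \<Rightarrow> real \<Rightarrow> nat \<Rightarrow> real" where
  "Psi a A q Q = q powr (-a) * (real Q) powr (-A)"

definition comeager :: "'a::topological_space set \<Rightarrow> bool" where
  "comeager S \<longleftrightarrow> (\<exists>F::nat \<Rightarrow> 'a set. (\<forall>n. open (F n) \<and> closure (F n) = UNIV) \<and> (\<Inter>n. F n) \<subseteq> S)"

end

theory Submission
  imports Defs
begin

text \<open>For fixed \<open>\<kappa>\<close> and \<open>Q\<^sub>0\<close> the set of \<open>(\<kappa>\<Psi>\<^sub>a\<^sub>,\<^sub>A, Q\<^sub>0)\<close>-approximable points is nowhere dense.
  Given a nonempty open \<open>U\<close>, an automorphism \<open>\<Phi>\<close> moves \<open>K\<close> into \<open>U\<close>. Since \<open>K\<close> is not uniformly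
  approximable, some \<open>x \<in> K\<close> fails approximation at an arbitrarily large level \<open>Q\<^sub>2\<close> with a large
  constant; as \<open>\<Phi>\<close> distorts distances and heights only by bounded factors, \<open>\<Phi> x \<in> U\<close> then fails
  approximation at the comparable level \<open>Q\<^sub>2 div c\<close>. Only finitely many rationals of bounded height lie
  near \<open>\<Phi> x\<close>, so this failure persists, with half the constant, on a small ball around \<open>\<Phi> x\<close>.
  Every \<open>\<kappa>\<Psi>\<^sub>a\<^sub>,\<^sub>A\<close>-approximable point lies in one of countably many such sets (round \<open>\<kappa>\<close> up to an
  integer), hence the badly approximable points form a comeager set.\<close>

lemma Psi_nonneg: "0 \<le> Psi a A q Q"
  by (simp add: Psi_def)

lemma Psi_pos: "0 < q \<Longrightarrow> 0 < Q \<Longrightarrow> 0 < Psi a A q Q"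
  by (simp add: Psi_def)

lemma powr_neg_le_of_ratio_bounded:
  fixes u v k a :: real
  assumes "0 < u" "0 < v" "1 \<le> k" "u \<le> k * v" "v \<le> k * u"
  shows "v powr (-a) \<le> k powr \<bar>a\<bar> * u powr (-a)"
proof -
  have ratio: "1 / k \<le> v / u" "v / u \<le> k"
    using assms by (simp_all add: field_simps)
  have "(v / u) powr (-a) \<le> k powr \<bar>a\<bar>"
  proof (cases "a \<le> 0")
    case True
    then show ?thesis using ratio assms by (simp add: powr_mono2)
  next
    case False
    have "(v / u) powr (-a) = (u / v) powr a"
      using assms by (simp add: powr_minus_divide powr_divide)
    also have "\<dots> \<le> k powr a"
      using False ratio assms by (intro powr_mono2) (simp_all add: field_simps)
    finally show ?thesis using False by simp
  qed
  then show ?thesis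
    using assms by (simp add: powr_divide divide_le_eq mult.commute)
qed

lemma Psi_le_of_ratio_bounded:
  fixes q q' k k' :: real and Q Q' :: nat
  assumes "0 < q" "0 < q'" "0 < Q" "0 < Q'" "1 \<le> k" "1 \<le> k'"
    and "q \<le> k * q'" "q' \<le> k * q" "real Q \<le> k' * real Q'" "real Q' \<le> k' * real Q"
  shows "Psi a A q' Q' \<le> k powr \<bar>a\<bar> * k' powr \<bar>A\<bar> * Psi a A q Q"
proof -
  have "Psi a A q' Q' \<le> (k powr \<bar>a\<bar> * q powr (-a)) * (k' powr \<bar>A\<bar> * real Q powr (-A))"
    unfolding Psi_def using assms
    by (intro mult_mono powr_neg_le_of_ratio_bounded) simp_all
  then show ?thesis by (simp add: Psi_def mult_ac)
qed

lemma div_mult_bounds: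
  fixes c m n :: nat
  assumes "0 < c" "0 < n" "c * n \<le> m"
  shows "n \<le> m div c" "c * (m div c) \<le> m" "m \<le> 2 * c * (m div c)"
proof -
  show "n \<le> m div c" using assms by (simp add: less_eq_div_iff_mult_less_eq mult.commute)
  then have "c \<le> c * (m div c)" using assms(2) by simp
  moreover have "m = c * (m div c) + m mod c" by simp
  moreover have "m mod c < c" using assms(1) by simp
  ultimately show "m \<le> 2 * c * (m div c)" by linarith
  show "c * (m div c) \<le> m" by simp
qed

definition approx_at :: "'a::metric_space set \<Rightarrow> ('a \<Rightarrow> real) \<Rightarrow> (real \<Rightarrow> nat \<Rightarrow> real) \<Rightarrow> nat \<Rightarrow> 'a \<Rightarrow> bool" where
  "approx_at Qs H \<Psi> Q x \<longleftrightarrow> (\<exists>r\<in>Qs. H r \<le> real Q \<and> dist x r < \<Psi> (H r) Q)"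

lemma approx_from_iff_approx_at: "approx_from Qs H \<Psi> Q0 x \<longleftrightarrow> (\<forall>Q\<ge>Q0. approx_at Qs H \<Psi> Q x)"
  by (simp add: approx_from_def approx_at_def)

lemma approx_at_mono:
  assumes "approx_at Qs H \<Psi> Q x" "\<And>q. \<Psi> q Q \<le> \<Psi>' q Q"
  shows "approx_at Qs H \<Psi>' Q x"
  using assms unfolding approx_at_def by (meson order_less_le_trans)

lemma approx_from_mono:
  assumes "approx_from Qs H \<Psi> Q0 x" "\<And>q Q. \<Psi> q Q \<le> \<Psi>' q Q"
  shows "approx_from Qs H \<Psi>' Q0 x"
  using assms approx_at_mono unfolding approx_from_iff_approx_at by blast

lemma automorphism_constants:
  assumes "automorphism Qs H \<Phi>" and Hpos: "\<forall>r\<in>Qs. 0 < H r"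
  obtains L :: real and c :: nat where "0 < L" "\<And>x y. dist x y \<le> L * dist (\<Phi> x) (\<Phi> y)"
    and "Qs \<subseteq> \<Phi> ` Qs" and "1 \<le> c"
    and "\<And>r. r \<in> Qs \<Longrightarrow> H r / real c \<le> H (\<Phi> r) \<and> H (\<Phi> r) \<le> real c * H r"
proof -
  have "bi_lipschitz \<Phi>" and onto: "Qs \<subseteq> \<Phi> ` Qs"
    and "\<exists>C\<ge>1. \<forall>r\<in>Qs. H r / C \<le> H (\<Phi> r) \<and> H (\<Phi> r) \<le> C * H r"
    using assms(1) by (simp_all add: automorphism_def)
  then obtain L C where "1 \<le> L" and lip: "\<And>x y. dist x y \<le> L * dist (\<Phi> x) (\<Phi> y)"
    and "1 \<le> C" and C: "\<And>r. r \<in> Qs \<Longrightarrow> H r / C \<le> H (\<Phi> r) \<and> H (\<Phi> r) \<le> C * H r"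
    unfolding bi_lipschitz_def by blast
  define c where "c = nat \<lceil>C\<rceil>"
  have "C \<le> real c" unfolding c_def by (rule real_nat_ceiling_ge)
  have "H r / real c \<le> H (\<Phi> r) \<and> H (\<Phi> r) \<le> real c * H r" if "r \<in> Qs" for r
  proof -
    have "0 < H r" using Hpos that by blast
    then have "H r / real c \<le> H r / C" "C * H r \<le> real c * H r"
      using \<open>1 \<le> C\<close> \<open>C \<le> real c\<close> by (auto intro!: divide_left_mono mult_right_mono)
    then show ?thesis using C[OF that] by linarith
  qed
  moreover have "1 \<le> c" using \<open>1 \<le> C\<close> \<open>C \<le> real c\<close> by linarith
  moreover have "0 < L" using \<open>1 \<le> L\<close> by simp
  ultimately show ?thesis using that lip onto by blast
qed

lemma not_approx_at_image:
  fixes \<Phi> :: "'a::metric_space \<Rightarrow> 'a" and Q Q2 :: nat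
  assumes Hpos: "\<forall>r\<in>Qs. 0 < H r"
    and lip: "\<And>x y. dist x y \<le> L * dist (\<Phi> x) (\<Phi> y)" and "0 < L"
    and onto: "Qs \<subseteq> \<Phi> ` Qs"
    and height: "\<And>r. r \<in> Qs \<Longrightarrow> H r / c \<le> H (\<Phi> r) \<and> H (\<Phi> r) \<le> c * H r" and "1 \<le> c"
    and "0 < Q" and Q2_lower: "c * real Q \<le> real Q2" and Q2_upper: "real Q2 \<le> 2 * c * real Q"
    and "0 \<le> \<kappa>"
    and bad: "\<not> approx_at Qs H (\<lambda>q Q. \<kappa> * Psi a A q Q) Q2 x"
  shows "\<not> approx_at Qs H
           (\<lambda>q Q. \<kappa> / (L * (c powr \<bar>a\<bar> * (2 * c) powr \<bar>A\<bar>)) * Psi a A q Q) Q (\<Phi> x)"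
proof
  define M where "M = c powr \<bar>a\<bar> * (2 * c) powr \<bar>A\<bar>"
  have "0 < M" using \<open>1 \<le> c\<close> by (simp add: M_def)
  assume "approx_at Qs H (\<lambda>q Q. \<kappa> / (L * M) * Psi a A q Q) Q (\<Phi> x)"
  then obtain r' where r': "r' \<in> Qs" "H r' \<le> real Q" "dist (\<Phi> x) r' < \<kappa> / (L * M) * Psi a A (H r') Q"
    by (auto simp: approx_at_def M_def)
  obtain r where r: "r \<in> Qs" "r' = \<Phi> r" using r' onto by blast
  have heights: "H r \<le> c * H r'" "H r' \<le> c * H r"
    using height[OF r(1)] r(2) \<open>1 \<le> c\<close> by (simp_all add: field_simps)
  have "real Q \<le> c * real Q" "real Q2 \<le> 2 * c * real Q2"
    using \<open>1 \<le> c\<close> by (simp_all add: mult_le_cancel_right1)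
  then have levels: "real Q \<le> 2 * c * real Q2" "real Q2 \<le> 2 * c * real Q"
    using Q2_lower Q2_upper by linarith+
  have "0 < Q2" using levels \<open>0 < Q\<close> by (cases Q2) simp_all
  have "H r \<le> c * real Q"
    using heights r'(2) \<open>1 \<le> c\<close> by (meson mult_left_mono order.trans zero_le_one)
  then have "\<kappa> * Psi a A (H r) Q2 \<le> dist x r"
    using bad r(1) Q2_lower by (auto simp: approx_at_def not_less)
  also have "\<dots> \<le> L * dist (\<Phi> x) r'" using lip r(2) by simp
  also have "\<dots> < \<kappa> / M * Psi a A (H r') Q"
    using r'(3) \<open>0 < L\<close> \<open>0 < M\<close> by (simp add: field_simps)
  also have "\<dots> \<le> \<kappa> / M * (M * Psi a A (H r) Q2)"
    unfolding M_def using heights levels Hpos r r' \<open>0 < Q\<close> \<open>0 < Q2\<close> \<open>1 \<le> c\<close> \<open>0 \<le> \<kappa>\<close>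
    by (intro mult_left_mono Psi_le_of_ratio_bounded) simp_all
  also have "\<dots> = \<kappa> * Psi a A (H r) Q2" using \<open>0 < M\<close> by simp
  finally show False by simp
qed

lemma ball_not_approx_at:
  fixes y :: "'a::metric_space"
  assumes fin: "finite ({r\<in>Qs. H r \<le> real Q} \<inter> ball y 1)"
    and Hpos: "\<forall>r\<in>Qs. 0 < H r" and pos: "\<And>q. 0 < q \<Longrightarrow> 0 < \<Psi> q Q"
    and bad: "\<not> approx_at Qs H (\<lambda>q Q. 2 * \<Psi> q Q) Q y"
  obtains \<delta> where "0 < \<delta>" "\<And>z. z \<in> ball y \<delta> \<Longrightarrow> \<not> approx_at Qs H \<Psi> Q z"
proof -
  define F where "F = {r\<in>Qs. H r \<le> real Q} \<inter> ball y 1"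
  have "open (- F)" using fin unfolding F_def by (intro open_Compl finite_imp_closed)
  moreover have "y \<notin> F"
    using bad Hpos pos by (auto simp: F_def approx_at_def)
  ultimately obtain e where "0 < e" "ball y e \<subseteq> - F" using open_contains_ball by blast
  define \<delta> where "\<delta> = min e 1 / 2"
  have "\<not> approx_at Qs H \<Psi> Q z" if z: "dist y z < \<delta>" for z
  proof
    assume "approx_at Qs H \<Psi> Q z"
    then obtain r where r: "r \<in> Qs" "H r \<le> real Q" "dist z r < \<Psi> (H r) Q"
      by (auto simp: approx_at_def)
    have "2 * \<Psi> (H r) Q \<le> dist y r" using bad r(1,2) by (auto simp: approx_at_def not_less)
    moreover have "dist y r \<le> dist y z + dist z r" by (rule dist_triangle)
    ultimately have "dist y r < min e 1" using z r(3) by (simp add: \<delta>_def)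
    then have "r \<in> F \<inter> ball y e" using r by (simp add: F_def)
    then show False using \<open>ball y e \<subseteq> - F\<close> by blast
  qed
  moreover have "0 < \<delta>" using \<open>0 < e\<close> by (simp add: \<delta>_def)
  ultimately show ?thesis using that by (simp add: dist_commute)
qed

lemma exists_badly_approximable_point_in_open:
  fixes Qs :: "('a::{metric_space,complete_space}) set" and H :: "'a \<Rightarrow> real"
    and K :: "'a set" and a A :: real
  assumes "diophantine_space Qs H"
    and "automorphism_property Qs H K"
    and nu: "\<And>\<kappa>. \<kappa> > 0 \<Longrightarrow> \<not> uniformly_approximable Qs H (\<lambda>q Q. \<kappa> * Psi a A q Q) K"
    and "open U" "U \<noteq> {}" "0 < \<kappa>"
  shows "\<exists>y\<in>U. \<exists>Q>N. \<not> approx_at Qs H (\<lambda>q Q. \<kappa> * Psi a A q Q) Q y"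
proof -
  have Hpos: "\<forall>r\<in>Qs. 0 < H r" using assms(1) by (simp add: diophantine_space_def)
  obtain \<Phi> where "automorphism Qs H \<Phi>" "\<Phi> ` K \<subseteq> U"
    using assms(2,4,5) unfolding automorphism_property_def by blast
  obtain L and c :: nat where "0 < L" and lip: "\<And>x y. dist x y \<le> L * dist (\<Phi> x) (\<Phi> y)"
    and onto: "Qs \<subseteq> \<Phi> ` Qs" and "1 \<le> c"
    and height: "\<And>r. r \<in> Qs \<Longrightarrow> H r / real c \<le> H (\<Phi> r) \<and> H (\<Phi> r) \<le> real c * H r"
    using automorphism_constants[OF \<open>automorphism Qs H \<Phi>\<close> Hpos] by metis
  define M where "M = real c powr \<bar>a\<bar> * (2 * real c) powr \<bar>A\<bar>"
  have "0 < M" using \<open>1 \<le> c\<close> by (simp add: M_def)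
  \<comment> \<open>\<open>L * M\<close> is exactly the loss of constant caused by transporting along \<open>\<Phi>\<close>.\<close>
  then have "\<not> uniformly_approximable Qs H (\<lambda>q Q. \<kappa> * L * M * Psi a A q Q) K"
    using nu \<open>0 < \<kappa>\<close> \<open>0 < L\<close> by simp
  then obtain x Q2 where "x \<in> K" "c * Suc N \<le> Q2"
    and bad: "\<not> approx_at Qs H (\<lambda>q Q. \<kappa> * L * M * Psi a A q Q) Q2 x"
    unfolding uniformly_approximable_def approx_from_iff_approx_at by blast
  define Q where "Q = Q2 div c"
  have "Suc N \<le> Q" and Q_bounds: "c * Q \<le> Q2" "Q2 \<le> 2 * c * Q"
    using div_mult_bounds[OF _ _ \<open>c * Suc N \<le> Q2\<close>] \<open>1 \<le> c\<close> by (simp_all add: Q_def)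
  have "real c * real Q \<le> real Q2" "real Q2 \<le> 2 * real c * real Q"
    using Q_bounds[THEN of_nat_mono[where 'a=real]] by simp_all
  with \<open>Suc N \<le> Q\<close> \<open>1 \<le> c\<close> \<open>0 < \<kappa>\<close> \<open>0 < L\<close> \<open>0 < M\<close>
  have "\<not> approx_at Qs H (\<lambda>q Q. \<kappa> * L * M / (L * (real c powr \<bar>a\<bar> * (2 * real c) powr \<bar>A\<bar>)) * Psi a A q Q) Q (\<Phi> x)"
    by (intro not_approx_at_image[OF Hpos lip _ onto height _ _ _ _ _ bad]) simp_all
  then have "\<not> approx_at Qs H (\<lambda>q Q. \<kappa> * Psi a A q Q) Q (\<Phi> x)"
    using \<open>0 < L\<close> \<open>0 < M\<close> by (simp add: M_def[symmetric])
  moreover have "\<Phi> x \<in> U" using \<open>x \<in> K\<close> \<open>\<Phi> ` K \<subseteq> U\<close> by blast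
  ultimately show ?thesis
    using \<open>Suc N \<le> Q\<close> by (intro bexI[of _ "\<Phi> x"] exI[of _ Q]) simp_all
qed

definition nowhere_dense :: "'a::topological_space set \<Rightarrow> bool" where
  "nowhere_dense S \<longleftrightarrow> interior (closure S) = {}"

lemma nowhere_denseI:
  assumes "\<And>U. open U \<Longrightarrow> U \<noteq> {} \<Longrightarrow> \<exists>V. open V \<and> V \<noteq> {} \<and> V \<subseteq> U \<and> V \<inter> S = {}"
  shows "nowhere_dense S"
proof (rule ccontr)
  assume "\<not> nowhere_dense S"
  then obtain V where "open V" "V \<noteq> {}" "V \<subseteq> interior (closure S)" "V \<inter> S = {}"
    using assms[of "interior (closure S)"] by (auto simp: nowhere_dense_def)
  then have "V \<inter> closure S = {}" by (simp add: open_Int_closure_eq_empty)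
  then show False
    using \<open>V \<noteq> {}\<close> \<open>V \<subseteq> interior (closure S)\<close> interior_subset by blast
qed

lemma comeager_mono: "comeager S \<Longrightarrow> S \<subseteq> T \<Longrightarrow> comeager T"
  unfolding comeager_def by blast

lemma comeager_Compl_UN_nowhere_dense:
  assumes "countable I" "\<And>i. i \<in> I \<Longrightarrow> nowhere_dense (E i)"
  shows "comeager (- (\<Union>i\<in>I. E i))"
proof (cases "I = {}")
  case True
  then show ?thesis unfolding comeager_def by (intro exI[of _ "\<lambda>_. UNIV"]) simp
next
  case False
  define F where "F n = - closure (E (from_nat_into I n))" for n
  have "open (F n)" for n unfolding F_def by (intro open_Compl closed_closure)
  moreover have "closure (F n) = UNIV" for n
    using assms(2)[OF from_nat_into[OF False]]
    by (simp add: F_def closure_complement nowhere_dense_def)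
  moreover have "(\<Inter>n. F n) \<subseteq> - (\<Union>i\<in>I. E i)"
  proof
    fix x assume x: "x \<in> (\<Inter>n. F n)"
    show "x \<in> - (\<Union>i\<in>I. E i)"
    proof
      assume "x \<in> (\<Union>i\<in>I. E i)"
      then obtain i where "i \<in> I" "x \<in> E i" by blast
      then have "x \<in> closure (E (from_nat_into I (to_nat_on I i)))"
        using assms(1) closure_subset by (auto simp: from_nat_into_to_nat_on)
      then show False using x by (auto simp: F_def)
    qed
  qed
  ultimately show ?thesis unfolding comeager_def by blast
qed

lemma nowhere_dense_approx_from_Psi:
  fixes Qs :: "('a::{metric_space,complete_space}) set" and H :: "'a \<Rightarrow> real"
    and K :: "'a set" and a A :: real
  assumes dio: "diophantine_space Qs H"
    and "automorphism_property Qs H K"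
    and fin: "\<And>Q x e. Q > 0 \<Longrightarrow> finite ({r\<in>Qs. H r \<le> Q} \<inter> ball x e)"
    and "\<And>\<kappa>. \<kappa> > 0 \<Longrightarrow> \<not> uniformly_approximable Qs H (\<lambda>q Q. \<kappa> * Psi a A q Q) K"
  shows "nowhere_dense {x. approx_from Qs H (\<lambda>q Q. \<kappa> * Psi a A q Q) Q0 x}"
proof (rule nowhere_denseI)
  fix U :: "'a set" assume "open U" "U \<noteq> {}"
  have Hpos: "\<forall>r\<in>Qs. 0 < H r" using dio by (simp add: diophantine_space_def)
  \<comment> \<open>\<open>\<kappa>\<close> may be nonpositive, but the ball argument needs a positive approximation function.\<close>
  define \<kappa>' where "\<kappa>' = max \<kappa> 1"
  have "0 < \<kappa>'" by (simp add: \<kappa>'_def)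
  then have "0 < 2 * \<kappa>'" by simp
  obtain y Q where "y \<in> U" "Q0 < Q"
    and bad: "\<not> approx_at Qs H (\<lambda>q Q. 2 * (\<kappa>' * Psi a A q Q)) Q y"
    using exists_badly_approximable_point_in_open[OF assms(1,2,4) \<open>open U\<close> \<open>U \<noteq> {}\<close> \<open>0 < 2 * \<kappa>'\<close>, where N=Q0]
    by (auto simp: mult.assoc)
  have "finite ({r\<in>Qs. H r \<le> real Q} \<inter> ball y 1)" using fin \<open>Q0 < Q\<close> by simp
  moreover have "0 < \<kappa>' * Psi a A q Q" if "0 < q" for q
    using \<open>0 < \<kappa>'\<close> \<open>Q0 < Q\<close> that by (simp add: Psi_pos)
  ultimately obtain \<delta> where "0 < \<delta>"
    and \<delta>: "\<And>z. z \<in> ball y \<delta> \<Longrightarrow> \<not> approx_at Qs H (\<lambda>q Q. \<kappa>' * Psi a A q Q) Q z"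
    using ball_not_approx_at[OF _ Hpos _ bad] by blast
  obtain e where "0 < e" "ball y e \<subseteq> U" using \<open>open U\<close> \<open>y \<in> U\<close> open_contains_ball by blast
  have "\<not> approx_from Qs H (\<lambda>q Q. \<kappa> * Psi a A q Q) Q0 z" if "z \<in> ball y \<delta>" for z
  proof
    assume "approx_from Qs H (\<lambda>q Q. \<kappa> * Psi a A q Q) Q0 z"
    then have "approx_from Qs H (\<lambda>q Q. \<kappa>' * Psi a A q Q) Q0 z"
      by (rule approx_from_mono) (simp add: \<kappa>'_def mult_right_mono Psi_nonneg)
    then show False using \<delta>[OF that] \<open>Q0 < Q\<close> by (simp add: approx_from_iff_approx_at)
  qed
  then show "\<exists>V. open V \<and> V \<noteq> {} \<and> V \<subseteq> U \<and> V \<inter> {x. approx_from Qs H (\<lambda>q Q. \<kappa> * Psi a A q Q) Q0 x} = {}"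
    using \<open>0 < \<delta>\<close> \<open>0 < e\<close> \<open>ball y e \<subseteq> U\<close> by (intro exI[of _ "ball y (min \<delta> e)"]) auto
qed

theorem proposition1:
  fixes Qs :: "('a::{metric_space,complete_space}) set" and H :: "'a \<Rightarrow> real"
    and K :: "'a set" and a A :: real
  assumes "diophantine_space Qs H"
    and "automorphism_property Qs H K"
    and "\<And>Q x e. Q > 0 \<Longrightarrow> finite ({r\<in>Qs. H r \<le> Q} \<inter> ball x e)"
    and "\<And>\<kappa>. \<kappa> > 0 \<Longrightarrow> \<not> uniformly_approximable Qs H (\<lambda>q Q. \<kappa> * Psi a A q Q) K"
  shows "comeager {x. \<forall>\<kappa>>0. \<not> approximable Qs H (\<lambda>q Q. \<kappa> * Psi a A q Q) x}"
proof -
  define E where "E = (\<lambda>(m::nat, Q0). {x. approx_from Qs H (\<lambda>q Q. real m * Psi a A q Q) Q0 x})"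
  have "comeager (- (\<Union>i. E i))"
    using nowhere_dense_approx_from_Psi[OF assms]
    by (intro comeager_Compl_UN_nowhere_dense) (auto simp: E_def)
  moreover have "- (\<Union>i. E i) \<subseteq> {x. \<forall>\<kappa>>0. \<not> approximable Qs H (\<lambda>q Q. \<kappa> * Psi a A q Q) x}"
  proof (intro subsetI CollectI allI impI notI)
    fix x and \<kappa> :: real
    assume "x \<in> - (\<Union>i. E i)" and approx: "approximable Qs H (\<lambda>q Q. \<kappa> * Psi a A q Q) x"
    obtain Q0 where "approx_from Qs H (\<lambda>q Q. \<kappa> * Psi a A q Q) Q0 x"
      using approx by (auto simp: approximable_def)
    then have "approx_from Qs H (\<lambda>q Q. real (nat \<lceil>\<kappa>\<rceil>) * Psi a A q Q) Q0 x"
      by (rule approx_from_mono) (simp add: mult_right_mono Psi_nonneg real_nat_ceiling_ge)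
    then have "x \<in> E (nat \<lceil>\<kappa>\<rceil>, Q0)" by (simp add: E_def)
    with \<open>x \<in> - (\<Union>i. E i)\<close> show False by blast
  qed
  ultimately show ?thesis by (rule comeager_mono)
qed

end
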